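(* Let $\Gamma$ be a group and $S$ a $\Gamma$-graded inverse semigroup. The following are equivalent: (1) $S$ is locally strongly graded; (2) for all $\alpha\in\Gamma$ and $u\in E(S)\setminus\{0\}$ there is $v\in E(S)_\alpha\setminus\{0\}$ with $v\le u$; (3) for all $\alpha,\beta\in\Gamma$ and $s\in S_{\alpha\beta}\setminus\{0\}$ there is $u\in E(S)\setminus\{0\}$ with $u\le s^{-1}s$ and $su\in S_\alpha S_\beta$; (4) for all $\alpha,\beta\in\Gamma$ and $s\in S_{\alpha\beta}\setminus\{0\}$ there is $u\in E(S)\setminus\{0\}$ with $u\le ss^{-1}$ and $us\in S_\alpha S_\beta$.
   Context: Semigroups have a zero; $S$ is $\Gamma$-graded via $\deg:S\setminus\{0\}\to\Gamma$ with $\deg(st)=\deg(s)\deg(t)$ whenever $st\neq0$; $S_\alpha=\deg^{-1}(\alpha)\cup\{0\}$. $E(S)$ is the set of idempotents, $E(S)_\alpha=\{ss^{-1}:s\in S_\alpha\}$. Natural partial order: $s\le t$ iff $s=tu$ for some $u\in E(S)$. $S$ is locally strongly graded if for all $\alpha,\beta\in\Gamma$ and $s\in S_{\alpha\beta}\setminus\{0\}$ there exists $t\in S_\alpha S_\beta\setminus\{0\}$ with $t\le s$. *)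

theory Defs
  imports "HOL-Algebra.Group"
begin

definition semigroup_zero :: "'a set \<Rightarrow> ('a \<Rightarrow> 'a \<Rightarrow> 'a) \<Rightarrow> 'a \<Rightarrow> bool" where
  "semigroup_zero S smul z \<longleftrightarrow>
     z \<in> S \<and>
     (\<forall>x\<in>S. \<forall>y\<in>S. smul x y \<in> S) \<and>
     (\<forall>x\<in>S. \<forall>y\<in>S. \<forall>w\<in>S. smul (smul x y) w = smul x (smul y w)) \<and>
     (\<forall>x\<in>S. smul z x = z \<and> smul x z = z)"

definition inverse_semigroup_zero :: "'a set \<Rightarrow> ('a \<Rightarrow> 'a \<Rightarrow> 'a) \<Rightarrow> 'a \<Rightarrow> bool" where
  "inverse_semigroup_zero S smul z \<longleftrightarrow>
     semigroup_zero S smul z \<and>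
     (\<forall>s\<in>S. \<exists>!t. t \<in> S \<and> smul (smul s t) s = s \<and> smul (smul t s) t = t)"

definition sinv :: "'a set \<Rightarrow> ('a \<Rightarrow> 'a \<Rightarrow> 'a) \<Rightarrow> 'a \<Rightarrow> 'a" where
  "sinv S smul s = (THE t. t \<in> S \<and> smul (smul s t) s = s \<and> smul (smul t s) t = t)"

definition idems :: "'a set \<Rightarrow> ('a \<Rightarrow> 'a \<Rightarrow> 'a) \<Rightarrow> 'a set" where
  "idems S smul = {e \<in> S. smul e e = e}"

definition npo :: "'a set \<Rightarrow> ('a \<Rightarrow> 'a \<Rightarrow> 'a) \<Rightarrow> 'a \<Rightarrow> 'a \<Rightarrow> bool" where
  "npo S smul s t \<longleftrightarrow> (\<exists>u \<in> idems S smul. s = smul t u)"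

definition graded :: "('g, 'b) monoid_scheme \<Rightarrow> 'a set \<Rightarrow> ('a \<Rightarrow> 'a \<Rightarrow> 'a) \<Rightarrow> 'a \<Rightarrow> ('a \<Rightarrow> 'g) \<Rightarrow> bool" where
  "graded G S smul z deg \<longleftrightarrow>
     (\<forall>s \<in> S - {z}. deg s \<in> carrier G) \<and>
     (\<forall>s \<in> S - {z}. \<forall>t \<in> S - {z}. smul s t \<noteq> z \<longrightarrow> deg (smul s t) = deg s \<otimes>\<^bsub>G\<^esub> deg t)"

definition hcomp :: "'a set \<Rightarrow> 'a \<Rightarrow> ('a \<Rightarrow> 'g) \<Rightarrow> 'g \<Rightarrow> 'a set" where
  "hcomp S z deg \<alpha> = {s \<in> S - {z}. deg s = \<alpha>} \<union> {z}"

definition setmult :: "('a \<Rightarrow> 'a \<Rightarrow> 'a) \<Rightarrow> 'a set \<Rightarrow> 'a set \<Rightarrow> 'a set" where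
  "setmult smul A B = {smul a b | a b. a \<in> A \<and> b \<in> B}"

definition idems_deg :: "'a set \<Rightarrow> ('a \<Rightarrow> 'a \<Rightarrow> 'a) \<Rightarrow> 'a \<Rightarrow> ('a \<Rightarrow> 'g) \<Rightarrow> 'g \<Rightarrow> 'a set" where
  "idems_deg S smul z deg \<alpha> = {smul s (sinv S smul s) | s. s \<in> hcomp S z deg \<alpha>}"

definition locally_strongly_graded ::
  "('g, 'b) monoid_scheme \<Rightarrow> 'a set \<Rightarrow> ('a \<Rightarrow> 'a \<Rightarrow> 'a) \<Rightarrow> 'a \<Rightarrow> ('a \<Rightarrow> 'g) \<Rightarrow> bool" where
  "locally_strongly_graded G S smul z deg \<longleftrightarrow>
     (\<forall>\<alpha> \<in> carrier G. \<forall>\<beta> \<in> carrier G.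
        \<forall>s \<in> hcomp S z deg (\<alpha> \<otimes>\<^bsub>G\<^esub> \<beta>) - {z}.
          \<exists>t \<in> setmult smul (hcomp S z deg \<alpha>) (hcomp S z deg \<beta>) - {z}. npo S smul t s)"

end

(*
  Idempotents of an inverse semigroup commute, so everything below an idempotent in the
  natural order is idempotent, and nonzero idempotents have degree 1.
  (1) => (2): a nonzero idempotent u lies in S_(a a^-1), so some nonzero t = x y <= u, x in S_a
  and y in S_(a^-1); then c = t x lies in S_a, is nonzero as c y = t, and c c^-1 <= u.
  (2) => (3): pick a nonzero w w^-1 <= s^-1 s with w in S_(b^-1); then s w w^-1 = (s w) w^-1
  lies in S_a S_b.  (2) => (4) is symmetric, using w w^-1 <= s s^-1 with w in S_a.
  (3), (4) => (1): s u and u s are restrictions of s, nonzero because u <= s^-1 s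
  (resp. u <= s s^-1) is recovered as s^-1 (s u) (resp. (u s) s^-1).
*)
theory Submission
  imports Defs
begin

locale inverse_semigroup0 =
  fixes S :: "'a set" and smul :: "'a \<Rightarrow> 'a \<Rightarrow> 'a" (infixl \<open>\<cdot>\<close> 70) and z :: 'a
  assumes inverse_semigroup_zero: "inverse_semigroup_zero S smul z"
begin

abbreviation inverse_of :: "'a \<Rightarrow> 'a" (\<open>_\<^sup>-\<^sup>1\<close> [1000] 999) where
  "s\<^sup>-\<^sup>1 \<equiv> sinv S smul s"

abbreviation E :: "'a set" where
  "E \<equiv> idems S smul"

abbreviation below :: "'a \<Rightarrow> 'a \<Rightarrow> bool" (infix \<open>\<preceq>\<close> 50) where
  "s \<preceq> t \<equiv> npo S smul s t"

lemma zero_closed: "z \<in> S"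
  and mult_closed [simp]: "x \<in> S \<Longrightarrow> y \<in> S \<Longrightarrow> x \<cdot> y \<in> S"
  and assoc: "x \<in> S \<Longrightarrow> y \<in> S \<Longrightarrow> w \<in> S \<Longrightarrow> x \<cdot> y \<cdot> w = x \<cdot> (y \<cdot> w)"
  and zero_mult [simp]: "x \<in> S \<Longrightarrow> z \<cdot> x = z"
  and mult_zero [simp]: "x \<in> S \<Longrightarrow> x \<cdot> z = z"
  using inverse_semigroup_zero unfolding inverse_semigroup_zero_def semigroup_zero_def by auto

lemma sinv_unique:
  assumes "s \<in> S" "t \<in> S" "s \<cdot> t \<cdot> s = s" "t \<cdot> s \<cdot> t = t"
  shows "t = s\<^sup>-\<^sup>1"
proof -
  have "\<exists>!t. t \<in> S \<and> s \<cdot> t \<cdot> s = s \<and> t \<cdot> s \<cdot> t = t"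
    using inverse_semigroup_zero assms(1) unfolding inverse_semigroup_zero_def by blast
  from the1_equality[OF this] show ?thesis
    unfolding sinv_def using assms by simp
qed

lemma sinv_closed [simp]: "s \<in> S \<Longrightarrow> s\<^sup>-\<^sup>1 \<in> S"
  and mult_sinv_mult: "s \<in> S \<Longrightarrow> s \<cdot> s\<^sup>-\<^sup>1 \<cdot> s = s"
  and sinv_mult_sinv: "s \<in> S \<Longrightarrow> s\<^sup>-\<^sup>1 \<cdot> s \<cdot> s\<^sup>-\<^sup>1 = s\<^sup>-\<^sup>1"
proof -
  assume "s \<in> S"
  then have "\<exists>!t. t \<in> S \<and> s \<cdot> t \<cdot> s = s \<and> t \<cdot> s \<cdot> t = t"
    using inverse_semigroup_zero unfolding inverse_semigroup_zero_def by blast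
  from theI'[OF this] show "s\<^sup>-\<^sup>1 \<in> S" "s \<cdot> s\<^sup>-\<^sup>1 \<cdot> s = s" "s\<^sup>-\<^sup>1 \<cdot> s \<cdot> s\<^sup>-\<^sup>1 = s\<^sup>-\<^sup>1"
    unfolding sinv_def by auto
qed

lemma idems_iff: "e \<in> E \<longleftrightarrow> e \<in> S \<and> e \<cdot> e = e"
  unfolding idems_def by auto

lemma idem_mult_idem_left:
  "e \<in> E \<Longrightarrow> x \<in> S \<Longrightarrow> e \<cdot> (e \<cdot> x) = e \<cdot> x"
  by (metis assoc idems_iff)

text \<open>The inverse a of e f is also inverted by f a e, hence equals it; this makes a idempotent,
  so a is its own inverse and e f = a.\<close>
lemma idem_mult_closed:
  assumes e: "e \<in> E" and f: "f \<in> E"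
  shows "e \<cdot> f \<in> E"
proof -
  have eS: "e \<in> S" and fS: "f \<in> S" using e f idems_iff by auto
  define a where "a = (e \<cdot> f)\<^sup>-\<^sup>1"
  have aS: "a \<in> S" using eS fS unfolding a_def by simp
  have inv1: "e \<cdot> f \<cdot> a \<cdot> (e \<cdot> f) = e \<cdot> f" and inv2: "a \<cdot> (e \<cdot> f) \<cdot> a = a"
    unfolding a_def using eS fS mult_sinv_mult sinv_mult_sinv by simp_all
  note simps = assoc idem_mult_idem_left[OF e] idem_mult_idem_left[OF f] eS fS aS
  have "e \<cdot> f \<cdot> (f \<cdot> a \<cdot> e) \<cdot> (e \<cdot> f) = e \<cdot> f \<cdot> a \<cdot> (e \<cdot> f)"
    by (simp add: simps)
  moreover have "f \<cdot> a \<cdot> e \<cdot> (e \<cdot> f) \<cdot> (f \<cdot> a \<cdot> e) = f \<cdot> (a \<cdot> (e \<cdot> f) \<cdot> a) \<cdot> e"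
    by (simp add: simps)
  ultimately have fae: "f \<cdot> a \<cdot> e = a"
    using sinv_unique[of "e \<cdot> f" "f \<cdot> a \<cdot> e"] inv1 inv2 eS fS aS unfolding a_def by simp
  have "a \<cdot> a = f \<cdot> a \<cdot> e \<cdot> (f \<cdot> a \<cdot> e)"
    using fae by simp
  also have "\<dots> = f \<cdot> (a \<cdot> (e \<cdot> f) \<cdot> a) \<cdot> e"
    by (simp add: simps)
  finally have aa: "a \<cdot> a = a"
    using inv2 fae by simp
  have "a = a\<^sup>-\<^sup>1"
    using sinv_unique[OF aS aS] aa aS by (simp add: assoc)
  moreover have "e \<cdot> f = a\<^sup>-\<^sup>1"
    using sinv_unique[of a "e \<cdot> f"] inv1 inv2 aS eS fS by (simp add: assoc)
  ultimately show ?thesis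
    using aa aS idems_iff by metis
qed

lemma idems_commute:
  assumes e: "e \<in> E" and f: "f \<in> E"
  shows "e \<cdot> f = f \<cdot> e"
proof -
  have eS: "e \<in> S" and fS: "f \<in> S" using e f idems_iff by auto
  have ef: "e \<cdot> f \<cdot> (e \<cdot> f) = e \<cdot> f" and fe: "f \<cdot> e \<cdot> (f \<cdot> e) = f \<cdot> e"
    using idem_mult_closed[OF e f] idem_mult_closed[OF f e] idems_iff by auto
  note simps = assoc idem_mult_idem_left[OF e] idem_mult_idem_left[OF f] eS fS
  have "f \<cdot> e = (e \<cdot> f)\<^sup>-\<^sup>1"
  proof (rule sinv_unique)
    show "e \<cdot> f \<cdot> (f \<cdot> e) \<cdot> (e \<cdot> f) = e \<cdot> f"
      using ef by (simp add: simps)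
    show "f \<cdot> e \<cdot> (e \<cdot> f) \<cdot> (f \<cdot> e) = f \<cdot> e"
      using fe by (simp add: simps)
  qed (use eS fS in simp_all)
  moreover have "e \<cdot> f = (e \<cdot> f)\<^sup>-\<^sup>1"
    using sinv_unique[of "e \<cdot> f" "e \<cdot> f"] ef eS fS by simp
  ultimately show ?thesis by simp
qed

lemma mult_sinv_idem: "s \<in> S \<Longrightarrow> s \<cdot> s\<^sup>-\<^sup>1 \<in> E"
  and sinv_mult_idem: "s \<in> S \<Longrightarrow> s\<^sup>-\<^sup>1 \<cdot> s \<in> E"
  using mult_sinv_mult sinv_mult_sinv by (simp_all add: idems_iff assoc)

lemma mult_sinv_nonzero: "s \<in> S \<Longrightarrow> s \<noteq> z \<Longrightarrow> s \<cdot> s\<^sup>-\<^sup>1 \<noteq> z"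
  by (metis mult_sinv_mult zero_mult)

lemma sinv_mult_nonzero: "s \<in> S \<Longrightarrow> s \<noteq> z \<Longrightarrow> s\<^sup>-\<^sup>1 \<cdot> s \<noteq> z"
  by (metis assoc mult_sinv_mult mult_zero sinv_closed)

lemma sinv_mult_sinv_mult: "s \<in> S \<Longrightarrow> x \<in> S \<Longrightarrow> s\<^sup>-\<^sup>1 \<cdot> (s \<cdot> (s\<^sup>-\<^sup>1 \<cdot> x)) = s\<^sup>-\<^sup>1 \<cdot> x"
  by (metis assoc mult_closed sinv_closed sinv_mult_sinv)

lemma npo_idem_iff:
  assumes "f \<in> E"
  shows "e \<preceq> f \<longleftrightarrow> e \<in> E \<and> f \<cdot> e = e"
proof
  assume "e \<preceq> f"
  then obtain x where x: "x \<in> E" "e = f \<cdot> x"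
    unfolding npo_def by blast
  then show "e \<in> E \<and> f \<cdot> e = e"
    using assms idem_mult_closed idem_mult_idem_left idems_iff by auto
next
  assume "e \<in> E \<and> f \<cdot> e = e"
  then show "e \<preceq> f"
    unfolding npo_def by metis
qed

lemma idem_mult_npo:
  assumes s: "s \<in> S" and e: "e \<in> E"
  shows "e \<cdot> s \<preceq> s"
proof -
  have eS: "e \<in> S" using e idems_iff by blast
  have "e \<cdot> s = e \<cdot> (s \<cdot> s\<^sup>-\<^sup>1) \<cdot> s"
    using s eS mult_sinv_mult[OF s] by (simp add: assoc)
  also have "\<dots> = s \<cdot> (s\<^sup>-\<^sup>1 \<cdot> e \<cdot> s)"
    using idems_commute[OF e mult_sinv_idem[OF s]] s eS by (simp add: assoc)
  finally have es: "e \<cdot> s = s \<cdot> (s\<^sup>-\<^sup>1 \<cdot> e \<cdot> s)" .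
  have "s\<^sup>-\<^sup>1 \<cdot> e \<cdot> s \<cdot> (s\<^sup>-\<^sup>1 \<cdot> e \<cdot> s) = s\<^sup>-\<^sup>1 \<cdot> (e \<cdot> s \<cdot> s\<^sup>-\<^sup>1 \<cdot> (e \<cdot> s))"
    using s eS by (simp add: assoc)
  also have "\<dots> = s\<^sup>-\<^sup>1 \<cdot> (s \<cdot> s\<^sup>-\<^sup>1 \<cdot> (e \<cdot> e) \<cdot> s)"
    using idems_commute[OF e mult_sinv_idem[OF s]] s eS by (simp add: assoc)
  also have "\<dots> = s\<^sup>-\<^sup>1 \<cdot> e \<cdot> s"
    using e s eS by (simp add: idems_iff assoc sinv_mult_sinv_mult)
  finally have "s\<^sup>-\<^sup>1 \<cdot> e \<cdot> s \<in> E"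
    using s eS idems_iff by simp
  with es show ?thesis
    unfolding npo_def by blast
qed

lemma sinv_zero: "z\<^sup>-\<^sup>1 = z"
  using sinv_unique[of z z] zero_closed by simp

lemma mult_nonzero_if_npo_sinv_mult:
  assumes s: "s \<in> S" and u: "u \<preceq> s\<^sup>-\<^sup>1 \<cdot> s" "u \<noteq> z"
  shows "s \<cdot> u \<noteq> z"
proof -
  have "u \<in> E" and "s\<^sup>-\<^sup>1 \<cdot> s \<cdot> u = u"
    using u npo_idem_iff[OF sinv_mult_idem[OF s]] by auto
  then have "s\<^sup>-\<^sup>1 \<cdot> (s \<cdot> u) = u"
    using s by (simp add: assoc idems_iff)
  then show ?thesis
    using s u(2) by (metis mult_zero sinv_closed)
qed

lemma mult_nonzero_if_npo_mult_sinv: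
  assumes s: "s \<in> S" and u: "u \<preceq> s \<cdot> s\<^sup>-\<^sup>1" "u \<noteq> z"
  shows "u \<cdot> s \<noteq> z"
proof -
  have uE: "u \<in> E" and "s \<cdot> s\<^sup>-\<^sup>1 \<cdot> u = u"
    using u npo_idem_iff[OF mult_sinv_idem[OF s]] by auto
  then have "u \<cdot> s \<cdot> s\<^sup>-\<^sup>1 = u"
    using s idems_commute[OF uE mult_sinv_idem[OF s]] by (simp add: assoc idems_iff)
  then show ?thesis
    using s u(2) by (metis zero_mult sinv_closed)
qed

end

definition idems_deg_dense ::
  "('g, 'b) monoid_scheme \<Rightarrow> 'a set \<Rightarrow> ('a \<Rightarrow> 'a \<Rightarrow> 'a) \<Rightarrow> 'a \<Rightarrow> ('a \<Rightarrow> 'g) \<Rightarrow> bool" where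
  "idems_deg_dense G S smul z deg \<longleftrightarrow>
     (\<forall>\<alpha> \<in> carrier G. \<forall>u \<in> idems S smul - {z}.
        \<exists>v \<in> idems_deg S smul z deg \<alpha> - {z}. npo S smul v u)"

definition right_restrictions_in_products ::
  "('g, 'b) monoid_scheme \<Rightarrow> 'a set \<Rightarrow> ('a \<Rightarrow> 'a \<Rightarrow> 'a) \<Rightarrow> 'a \<Rightarrow> ('a \<Rightarrow> 'g) \<Rightarrow> bool" where
  "right_restrictions_in_products G S smul z deg \<longleftrightarrow>
     (\<forall>\<alpha> \<in> carrier G. \<forall>\<beta> \<in> carrier G. \<forall>s \<in> hcomp S z deg (\<alpha> \<otimes>\<^bsub>G\<^esub> \<beta>) - {z}.
        \<exists>u \<in> idems S smul - {z}. npo S smul u (smul (sinv S smul s) s)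
          \<and> smul s u \<in> setmult smul (hcomp S z deg \<alpha>) (hcomp S z deg \<beta>))"

definition left_restrictions_in_products ::
  "('g, 'b) monoid_scheme \<Rightarrow> 'a set \<Rightarrow> ('a \<Rightarrow> 'a \<Rightarrow> 'a) \<Rightarrow> 'a \<Rightarrow> ('a \<Rightarrow> 'g) \<Rightarrow> bool" where
  "left_restrictions_in_products G S smul z deg \<longleftrightarrow>
     (\<forall>\<alpha> \<in> carrier G. \<forall>\<beta> \<in> carrier G. \<forall>s \<in> hcomp S z deg (\<alpha> \<otimes>\<^bsub>G\<^esub> \<beta>) - {z}.
        \<exists>u \<in> idems S smul - {z}. npo S smul u (smul s (sinv S smul s))
          \<and> smul u s \<in> setmult smul (hcomp S z deg \<alpha>) (hcomp S z deg \<beta>))"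

locale graded_inverse_semigroup0 = inverse_semigroup0 S smul z + group G
  for S and smul (infixl \<open>\<cdot>\<close> 70) and z and G :: "('g, 'b) monoid_scheme" (structure) +
  fixes deg :: "'a \<Rightarrow> 'g"
  assumes graded: "graded G S smul z deg"
begin

abbreviation homog :: "'g \<Rightarrow> 'a set" where
  "homog \<alpha> \<equiv> hcomp S z deg \<alpha>"

lemma deg_closed: "s \<in> S \<Longrightarrow> s \<noteq> z \<Longrightarrow> deg s \<in> carrier G"
  using graded unfolding graded_def by blast

lemma deg_mult: "s \<in> S \<Longrightarrow> t \<in> S \<Longrightarrow> s \<cdot> t \<noteq> z \<Longrightarrow> deg (s \<cdot> t) = deg s \<otimes> deg t"
  using graded unfolding graded_def by (metis Diff_iff mult_zero zero_mult singletonD)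

lemma deg_idem: "e \<in> E \<Longrightarrow> e \<noteq> z \<Longrightarrow> deg e = \<one>"
  using deg_mult[of e e] deg_closed[of e] by (simp add: idems_iff)

lemma homog_iff: "s \<in> homog \<alpha> \<longleftrightarrow> s \<in> S \<and> (s \<noteq> z \<longrightarrow> deg s = \<alpha>)"
  unfolding hcomp_def using zero_closed by auto

lemma idem_homog_one: "e \<in> E \<Longrightarrow> e \<in> homog \<one>"
  using deg_idem homog_iff idems_iff by blast

lemma homog_mult: "s \<in> homog \<alpha> \<Longrightarrow> t \<in> homog \<beta> \<Longrightarrow> s \<cdot> t \<in> homog (\<alpha> \<otimes> \<beta>)"
  unfolding homog_iff using deg_mult by force

lemma deg_sinv:
  assumes s: "s \<in> S" "s \<noteq> z"
  shows "deg (s\<^sup>-\<^sup>1) = inv (deg s)"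
proof -
  have "s\<^sup>-\<^sup>1 \<noteq> z" using s mult_sinv_nonzero mult_zero by metis
  then have "deg s = deg s \<otimes> deg (s\<^sup>-\<^sup>1) \<otimes> deg s"
    using s deg_mult[of "s \<cdot> s\<^sup>-\<^sup>1" s] deg_mult[of s "s\<^sup>-\<^sup>1"] mult_sinv_mult mult_sinv_nonzero
    by simp
  moreover have "deg s \<in> carrier G" "deg (s\<^sup>-\<^sup>1) \<in> carrier G"
    using s deg_closed \<open>s\<^sup>-\<^sup>1 \<noteq> z\<close> by auto
  ultimately have "deg s \<otimes> deg (s\<^sup>-\<^sup>1) = \<one>"
    by simp
  then show ?thesis
    using \<open>deg s \<in> carrier G\<close> \<open>deg (s\<^sup>-\<^sup>1) \<in> carrier G\<close> inv_comm inv_equality by metis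
qed

lemma sinv_homog: "s \<in> homog \<alpha> \<Longrightarrow> s\<^sup>-\<^sup>1 \<in> homog (inv \<alpha>)"
  unfolding homog_iff using deg_sinv sinv_zero by (cases "s = z") auto

lemma locally_strongly_graded_imp_idems_deg_dense:
  assumes lsg: "locally_strongly_graded G S smul z deg"
  shows "idems_deg_dense G S smul z deg"
  unfolding idems_deg_dense_def
proof (intro ballI)
  fix \<alpha> u
  assume \<alpha>: "\<alpha> \<in> carrier G" and u: "u \<in> E - {z}"
  have "u \<in> homog (\<alpha> \<otimes> inv \<alpha>) - {z}"
    using u \<alpha> idem_homog_one by simp
  then obtain t where t: "t \<in> setmult smul (homog \<alpha>) (homog (inv \<alpha>)) - {z}" "t \<preceq> u"
    using lsg \<alpha> unfolding locally_strongly_graded_def by (meson inv_closed)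
  then obtain a b where ab: "t = a \<cdot> b" "a \<in> homog \<alpha>" "b \<in> homog (inv \<alpha>)"
    unfolding setmult_def by blast
  have tE: "t \<in> E" and ut: "u \<cdot> t = t"
    using t(2) npo_idem_iff u by auto
  define c where "c = t \<cdot> a"
  have c: "c \<in> homog \<alpha>"
    using homog_mult[OF idem_homog_one[OF tE] ab(2)] \<alpha> unfolding c_def by simp
  have "c \<cdot> b = t"
    using ab tE unfolding c_def by (simp add: homog_iff idems_iff assoc)
  then have "c \<noteq> z"
    using t(1) ab(3) homog_iff by auto
  then have "c \<cdot> c\<^sup>-\<^sup>1 \<in> idems_deg S smul z deg \<alpha> - {z}"
    unfolding idems_deg_def using c mult_sinv_nonzero homog_iff by auto
  moreover have "u \<cdot> c = c"
    using ut ab tE u unfolding c_def by (simp add: homog_iff idems_iff flip: assoc)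
  then have "u \<cdot> (c \<cdot> c\<^sup>-\<^sup>1) = c \<cdot> c\<^sup>-\<^sup>1"
    using u c by (metis assoc homog_iff idems_iff Diff_iff sinv_closed)
  then have "c \<cdot> c\<^sup>-\<^sup>1 \<preceq> u"
    using npo_idem_iff u c mult_sinv_idem homog_iff by auto
  ultimately show "\<exists>v \<in> idems_deg S smul z deg \<alpha> - {z}. v \<preceq> u"
    by blast
qed

lemma idems_deg_dense_imp_right_restrictions:
  assumes dense: "idems_deg_dense G S smul z deg"
  shows "right_restrictions_in_products G S smul z deg"
  unfolding right_restrictions_in_products_def
proof (intro ballI)
  fix \<alpha> \<beta> s
  assume \<alpha>: "\<alpha> \<in> carrier G" and \<beta>: "\<beta> \<in> carrier G" and s: "s \<in> homog (\<alpha> \<otimes> \<beta>) - {z}"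
  have sS: "s \<in> S" using s homog_iff by blast
  have "s\<^sup>-\<^sup>1 \<cdot> s \<in> E - {z}"
    using sS s sinv_mult_idem sinv_mult_nonzero by blast
  then obtain v where v: "v \<in> idems_deg S smul z deg (inv \<beta>) - {z}" "v \<preceq> s\<^sup>-\<^sup>1 \<cdot> s"
    using dense \<beta> unfolding idems_deg_dense_def by (meson inv_closed)
  then obtain w where w: "w \<in> homog (inv \<beta>)" "v = w \<cdot> w\<^sup>-\<^sup>1"
    unfolding idems_deg_def by blast
  have "s \<cdot> w \<in> homog \<alpha>"
    using homog_mult[of s "\<alpha> \<otimes> \<beta>" w "inv \<beta>"] s w \<alpha> \<beta> by (simp add: m_assoc)
  moreover have "w\<^sup>-\<^sup>1 \<in> homog \<beta>"
    using sinv_homog[OF w(1)] \<beta> by simp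
  moreover have "s \<cdot> v = s \<cdot> w \<cdot> w\<^sup>-\<^sup>1"
    using w sS homog_iff by (simp add: assoc)
  ultimately have "s \<cdot> v \<in> setmult smul (homog \<alpha>) (homog \<beta>)"
    unfolding setmult_def by blast
  moreover have "v \<in> E"
    using w mult_sinv_idem homog_iff by simp
  ultimately show "\<exists>u \<in> E - {z}. u \<preceq> s\<^sup>-\<^sup>1 \<cdot> s \<and> s \<cdot> u \<in> setmult smul (homog \<alpha>) (homog \<beta>)"
    using v by blast
qed

lemma idems_deg_dense_imp_left_restrictions:
  assumes dense: "idems_deg_dense G S smul z deg"
  shows "left_restrictions_in_products G S smul z deg"
  unfolding left_restrictions_in_products_def
proof (intro ballI)
  fix \<alpha> \<beta> s
  assume \<alpha>: "\<alpha> \<in> carrier G" and \<beta>: "\<beta> \<in> carrier G" and s: "s \<in> homog (\<alpha> \<otimes> \<beta>) - {z}"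
  have sS: "s \<in> S" using s homog_iff by blast
  have "s \<cdot> s\<^sup>-\<^sup>1 \<in> E - {z}"
    using sS s mult_sinv_idem mult_sinv_nonzero by blast
  then obtain v where v: "v \<in> idems_deg S smul z deg \<alpha> - {z}" "v \<preceq> s \<cdot> s\<^sup>-\<^sup>1"
    using dense \<alpha> unfolding idems_deg_dense_def by blast
  then obtain w where w: "w \<in> homog \<alpha>" "v = w \<cdot> w\<^sup>-\<^sup>1"
    unfolding idems_deg_def by blast
  have "w\<^sup>-\<^sup>1 \<cdot> s \<in> homog \<beta>"
    using homog_mult[OF sinv_homog[OF w(1)], of s "\<alpha> \<otimes> \<beta>"] s \<alpha> \<beta> by (simp flip: m_assoc)
  moreover have "v \<cdot> s = w \<cdot> (w\<^sup>-\<^sup>1 \<cdot> s)"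
    using w sS homog_iff by (simp add: assoc)
  ultimately have "v \<cdot> s \<in> setmult smul (homog \<alpha>) (homog \<beta>)"
    unfolding setmult_def using w(1) by blast
  moreover have "v \<in> E"
    using w mult_sinv_idem homog_iff by simp
  ultimately show "\<exists>u \<in> E - {z}. u \<preceq> s \<cdot> s\<^sup>-\<^sup>1 \<and> u \<cdot> s \<in> setmult smul (homog \<alpha>) (homog \<beta>)"
    using v by blast
qed

lemma right_restrictions_imp_locally_strongly_graded:
  assumes "right_restrictions_in_products G S smul z deg"
  shows "locally_strongly_graded G S smul z deg"
  unfolding locally_strongly_graded_def
proof (intro ballI)
  fix \<alpha> \<beta> s
  assume "\<alpha> \<in> carrier G" "\<beta> \<in> carrier G" and s: "s \<in> homog (\<alpha> \<otimes> \<beta>) - {z}"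
  then obtain u where u: "u \<in> E - {z}" "u \<preceq> s\<^sup>-\<^sup>1 \<cdot> s"
    and su: "s \<cdot> u \<in> setmult smul (homog \<alpha>) (homog \<beta>)"
    using assms unfolding right_restrictions_in_products_def by blast
  have "s \<cdot> u \<noteq> z"
    using mult_nonzero_if_npo_sinv_mult u s homog_iff by blast
  moreover have "s \<cdot> u \<preceq> s"
    using u unfolding npo_def by blast
  ultimately show "\<exists>t \<in> setmult smul (homog \<alpha>) (homog \<beta>) - {z}. t \<preceq> s"
    using su by blast
qed

lemma left_restrictions_imp_locally_strongly_graded:
  assumes "left_restrictions_in_products G S smul z deg"
  shows "locally_strongly_graded G S smul z deg"
  unfolding locally_strongly_graded_def
proof (intro ballI)
  fix \<alpha> \<beta> s
  assume "\<alpha> \<in> carrier G" "\<beta> \<in> carrier G" and s: "s \<in> homog (\<alpha> \<otimes> \<beta>) - {z}"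
  then obtain u where u: "u \<in> E - {z}" "u \<preceq> s \<cdot> s\<^sup>-\<^sup>1"
    and us: "u \<cdot> s \<in> setmult smul (homog \<alpha>) (homog \<beta>)"
    using assms unfolding left_restrictions_in_products_def by blast
  have "u \<cdot> s \<noteq> z"
    using mult_nonzero_if_npo_mult_sinv u s homog_iff by blast
  moreover have "u \<cdot> s \<preceq> s"
    using idem_mult_npo u s homog_iff by blast
  ultimately show "\<exists>t \<in> setmult smul (homog \<alpha>) (homog \<beta>) - {z}. t \<preceq> s"
    using us by blast
qed

end

theorem proposition2p15:
  fixes G :: "('g, 'b) monoid_scheme"
    and S :: "'a set" and smul :: "'a \<Rightarrow> 'a \<Rightarrow> 'a" and z :: 'a and deg :: "'a \<Rightarrow> 'g"
  assumes "group G"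
    and "inverse_semigroup_zero S smul z"
    and "graded G S smul z deg"
  shows
   "(locally_strongly_graded G S smul z deg
      \<longleftrightarrow> (\<forall>\<alpha> \<in> carrier G. \<forall>u \<in> idems S smul - {z}.
             \<exists>v \<in> idems_deg S smul z deg \<alpha> - {z}. npo S smul v u))
    \<and> (locally_strongly_graded G S smul z deg
      \<longleftrightarrow> (\<forall>\<alpha> \<in> carrier G. \<forall>\<beta> \<in> carrier G.
             \<forall>s \<in> hcomp S z deg (\<alpha> \<otimes>\<^bsub>G\<^esub> \<beta>) - {z}.
               \<exists>u \<in> idems S smul - {z}. npo S smul u (smul (sinv S smul s) s)
                 \<and> smul s u \<in> setmult smul (hcomp S z deg \<alpha>) (hcomp S z deg \<beta>)))
    \<and> (locally_strongly_graded G S smul z deg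
      \<longleftrightarrow> (\<forall>\<alpha> \<in> carrier G. \<forall>\<beta> \<in> carrier G.
             \<forall>s \<in> hcomp S z deg (\<alpha> \<otimes>\<^bsub>G\<^esub> \<beta>) - {z}.
               \<exists>u \<in> idems S smul - {z}. npo S smul u (smul s (sinv S smul s))
                 \<and> smul u s \<in> setmult smul (hcomp S z deg \<alpha>) (hcomp S z deg \<beta>)))"
proof -
  interpret graded_inverse_semigroup0 S smul z G deg
    using assms by (simp add: graded_inverse_semigroup0_def graded_inverse_semigroup0_axioms_def
        inverse_semigroup0_def)
  have "locally_strongly_graded G S smul z deg \<longleftrightarrow> idems_deg_dense G S smul z deg"
    and "locally_strongly_graded G S smul z deg \<longleftrightarrow> right_restrictions_in_products G S smul z deg"
    and "locally_strongly_graded G S smul z deg \<longleftrightarrow> left_restrictions_in_products G S smul z deg"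
    using locally_strongly_graded_imp_idems_deg_dense idems_deg_dense_imp_right_restrictions
      idems_deg_dense_imp_left_restrictions right_restrictions_imp_locally_strongly_graded
      left_restrictions_imp_locally_strongly_graded
    by blast+
  then show ?thesis
    unfolding idems_deg_dense_def right_restrictions_in_products_def left_restrictions_in_products_def
    by blast
qed

end
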